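(* Let $d\ge2$. For $k\in\mathbb{N}$ let $g_k$ be the density on $S^d$ given by $g_k(\theta_0)=\frac{1+\cos^k\theta_0}{V_k}$, where $V_k=\int_{S^d}(1+\cos^k\theta_0)\,dS^d$. For $k,l\in\mathbb{N}$, let $Y_k,Y_l$ be independent isotropic random variables on $S^d$ with densities $g_k$ and $g_l$ respectively. Then $$V(Y_k+Y_l)=\frac{2\big(V(Y_k)+V(Y_l)\big)-V(Y_k)V(Y_l)}{2}.$$
   Context: $S^d=\{x\in\mathbb{R}^{d+1}:\|x\|=1\}$, $P=(1,0,\dots,0)$, and $\theta_0\in[0,\pi]$ denotes the first polar angle of a point $x\in S^d$, so $x_0=\cos\theta_0=\langle x,P\rangle$. The variance of a random variable $X$ on $S^d$ is $V(X)=E[\|X-P\|^2]=E[2-2\cos\theta_0]$. An isotropic random variable is one whose density depends only on $\theta_0$, written $y\mapsto F(\langle y,P\rangle)$. The sum $X_1+X_2$ of independent isotropic random variables with densities $F_1(\langle y,P\rangle)$, $F_2(\langle y,P\rangle)$ is the random variable with density $f(x)=\int_{S^d}F_1(\langle x',P\rangle)F_2(\langle x,x'\rangle)\,dx'$ (first move from $P$ to $x'$ according to $X_1$, then from $x'$ isotropically around $x'$ according to $X_2$). *)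

theory Defs
  imports "HOL-Analysis.Analysis"
begin

text \<open>Surface measure on the unit sphere of a Euclidean space, defined via the cone
construction: sigma(A) = DIM * lebesgue({t x. x in A, 0 < t < 1}).  Equivalently it is
the push-forward of DIM times Lebesgue measure on the open unit ball under the radial
projection x to x/|x|.  (Any positive multiple of the surface measure gives the same
statement, since all densities are normalised with respect to the same measure.)\<close>
definition sphere_measure :: "'a::euclidean_space measure" where
  "sphere_measure =
     distr (density (restrict_space lborel (ball 0 1)) (\<lambda>_. ennreal (real DIM('a))))
           borel (\<lambda>x. sgn x)"

definition norm_const :: "'a::euclidean_space \<Rightarrow> nat \<Rightarrow> real" where
  "norm_const P k = (\<integral>x. 1 + (x \<bullet> P) ^ k \<partial>sphere_measure)"

text \<open>Profile of the isotropic density g_k, as a function of cos theta_0 = t.\<close>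
definition g_prof :: "'a::euclidean_space \<Rightarrow> nat \<Rightarrow> real \<Rightarrow> real" where
  "g_prof P k t = (1 + t ^ k) / norm_const P k"

text \<open>Density of the sum X1 + X2 of independent isotropic random variables with
profiles F1, F2.\<close>
definition iso_sum_density ::
  "'a::euclidean_space \<Rightarrow> (real \<Rightarrow> real) \<Rightarrow> (real \<Rightarrow> real) \<Rightarrow> 'a \<Rightarrow> real" where
  "iso_sum_density P F1 F2 x = (\<integral>x'. F1 (x' \<bullet> P) * F2 (x \<bullet> x') \<partial>sphere_measure)"

definition sph_var :: "'a::euclidean_space \<Rightarrow> ('a \<Rightarrow> real) \<Rightarrow> real" where
  "sph_var P f = (\<integral>x. (norm (x - P))\<^sup>2 * f x \<partial>sphere_measure)"

end

theory Submission
  imports Defs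
begin

text \<open>The surface measure is the radial image of Lebesgue measure on the unit ball, so it is
  invariant under orthogonal maps, in particular under reflections. Reflections show that for a
  profile \<open>F\<close> one has \<open>\<integral> (x \<bullet> v) F(x \<bullet> P) = (v \<bullet> P) m(F)\<close> with
  \<open>m(F) = \<integral> (x \<bullet> P) F(x \<bullet> P)\<close>: an isotropic variable has mean \<open>m(F) P\<close>.
  Since \<open>|x - P|\<^sup>2 = 2 - 2 x \<bullet> P\<close> on the sphere, a probability profile has variance
  \<open>2 - 2 m(F)\<close>. Integrating first over the second step (Fubini), the mean of \<open>x \<bullet> P\<close> for a
  step centred at \<open>y\<close> is \<open>m(F\<^sub>2) (y \<bullet> P)\<close>, so the sum has variance
  \<open>2 - 2 m(F\<^sub>1) m(F\<^sub>2)\<close>, which is the claimed expression in the two variances.\<close>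

section \<open>Invariance of Lebesgue measure under orthogonal transformations\<close>

text \<open>The library proves this invariance only on \<open>real^'n\<close> with \<open>'n::{finite,wellorder}\<close>.
  It is transported to an arbitrary Euclidean space along the coordinate isomorphism with
  \<open>real ^ 'a basis_index\<close>; any well-order on the index type will do.\<close>

typedef (overloaded) ('a::euclidean_space) basis_index = "Basis :: 'a set"
  using nonempty_Basis by blast

lemma range_Rep_basis_index: "range Rep_basis_index = (Basis :: 'a::euclidean_space set)"
  by (rule type_definition.Rep_range[OF type_definition_basis_index])

lemma bij_betw_Rep_basis_index: "bij_betw Rep_basis_index UNIV (Basis :: 'a::euclidean_space set)"
  by (simp add: bij_betw_def inj_def Rep_basis_index_inject range_Rep_basis_index)

instance basis_index :: (euclidean_space) finite
proof
  show "finite (UNIV :: 'a basis_index set)"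
    using bij_betw_Rep_basis_index bij_betw_finite finite_Basis by blast
qed

instantiation basis_index :: (euclidean_space) wellorder
begin

definition less_eq_basis_index :: "'a basis_index \<Rightarrow> 'a basis_index \<Rightarrow> bool" where
  "less_eq_basis_index i j \<longleftrightarrow> to_nat_on UNIV i \<le> to_nat_on UNIV j"

definition less_basis_index :: "'a basis_index \<Rightarrow> 'a basis_index \<Rightarrow> bool" where
  "less_basis_index i j \<longleftrightarrow> to_nat_on UNIV i < to_nat_on UNIV j"

instance
proof
  have inj: "inj (to_nat_on (UNIV :: 'a basis_index set))"
    by (simp add: inj_on_to_nat_on)
  fix i j k :: "'a basis_index" and Q :: "'a basis_index \<Rightarrow> bool"
  show "i < j \<longleftrightarrow> i \<le> j \<and> \<not> j \<le> i" "i \<le> i" "i \<le> j \<or> j \<le> i"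
    by (auto simp: less_eq_basis_index_def less_basis_index_def)
  show "i \<le> j \<Longrightarrow> j \<le> k \<Longrightarrow> i \<le> k"
    by (simp add: less_eq_basis_index_def)
  show "i \<le> j \<Longrightarrow> j \<le> i \<Longrightarrow> i = j"
    using inj by (simp add: less_eq_basis_index_def inj_eq)
  assume step: "\<And>i. (\<And>j. j < i \<Longrightarrow> Q j) \<Longrightarrow> Q i"
  show "Q i"
  proof (induction i rule: measure_induct_rule[where f = "to_nat_on UNIV"])
    case (less i)
    show ?case
      by (rule step, rule less.IH) (simp add: less_basis_index_def)
  qed
qed

end

definition cart_of :: "'a::euclidean_space \<Rightarrow> real ^ 'a basis_index" where
  "cart_of x = (\<chi> i. x \<bullet> Rep_basis_index i)"

definition of_cart :: "real ^ 'a basis_index \<Rightarrow> 'a::euclidean_space" where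
  "of_cart v = (\<Sum>i\<in>UNIV. v $ i *\<^sub>R Rep_basis_index i)"

lemma inner_of_cart_Rep: "of_cart v \<bullet> Rep_basis_index j = v $ j"
proof -
  have "of_cart v \<bullet> Rep_basis_index j = (\<Sum>i\<in>UNIV. if i = j then v $ i else 0)"
    unfolding of_cart_def inner_sum_left
    by (intro sum.cong) (auto simp: inner_Basis Rep_basis_index Rep_basis_index_inject)
  then show ?thesis by simp
qed

lemma of_cart_cart_of [simp]: "of_cart (cart_of x) = x"
  using sum.reindex_bij_betw[OF bij_betw_Rep_basis_index, of "\<lambda>b. (x \<bullet> b) *\<^sub>R b"]
  by (simp add: of_cart_def cart_of_def euclidean_representation)

lemma cart_of_of_cart [simp]: "cart_of (of_cart v) = v"
  by (simp add: cart_of_def inner_of_cart_Rep vec_eq_iff)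

lemma linear_cart_of: "linear cart_of"
  by (rule linearI) (auto simp: cart_of_def vec_eq_iff inner_add_left)

lemma inner_cart_of: "cart_of x \<bullet> cart_of y = x \<bullet> y"
  using sum.reindex_bij_betw[OF bij_betw_Rep_basis_index, of "\<lambda>b. (x \<bullet> b) * (y \<bullet> b)"]
  by (simp add: inner_vec_def cart_of_def euclidean_inner[of x y])

lemma inner_of_cart: "of_cart v \<bullet> of_cart w = v \<bullet> w"
  using inner_cart_of[of "of_cart v" "of_cart w"] by simp

lemma linear_of_cart: "linear of_cart"
  by (rule linearI) (simp_all add: of_cart_def sum.distrib scaleR_add_left scaleR_sum_right)

lemma borel_measurable_linear:
  fixes f :: "'a::euclidean_space \<Rightarrow> 'b::euclidean_space"
  shows "linear f \<Longrightarrow> f \<in> borel_measurable borel"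
  by (intro borel_measurable_continuous_onI linear_continuous_on) (simp add: linear_conv_bounded_linear)

lemma lborel_distr_cart_of: "distr (lborel :: 'a::euclidean_space measure) borel cart_of = lborel"
proof (rule lborel_eqI[symmetric])
  fix l u :: "real ^ 'a basis_index"
  assume le: "\<And>b. b \<in> Basis \<Longrightarrow> l \<bullet> b \<le> u \<bullet> b"
  have le_Rep: "of_cart l \<bullet> b \<le> of_cart u \<bullet> b" if "b \<in> (Basis :: 'a set)" for b
  proof -
    obtain i where "b = Rep_basis_index i"
      using \<open>b \<in> Basis\<close> bij_betw_Rep_basis_index by (metis bij_betw_imp_surj_on imageE)
    then show ?thesis
      using le[of "axis i 1"] by (force simp: inner_of_cart_Rep inner_axis Basis_vec_def)
  qed
  have "x \<in> box (of_cart l) (of_cart u) \<longleftrightarrow>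
      (\<forall>i. l $ i < x \<bullet> Rep_basis_index i \<and> x \<bullet> Rep_basis_index i < u $ i)" for x :: 'a
    by (simp add: mem_box inner_of_cart_Rep flip: range_Rep_basis_index)
  then have "cart_of -` box l u = box (of_cart l) (of_cart u :: 'a)"
    by (auto simp: mem_box_cart cart_of_def)
  then have "emeasure (distr lborel borel cart_of) (box l u) = emeasure lborel (box (of_cart l) (of_cart u :: 'a))"
    by (simp add: emeasure_distr borel_measurable_linear linear_cart_of)
  also have "\<dots> = (\<Prod>b\<in>Basis. (of_cart u - of_cart l :: 'a) \<bullet> b)"
    using le_Rep by (rule emeasure_lborel_box)
  also have "\<dots> = (\<Prod>i\<in>UNIV. u $ i - l $ i)"
    using prod.reindex_bij_betw[OF bij_betw_Rep_basis_index, of "\<lambda>b. (of_cart u - of_cart l :: 'a) \<bullet> b"]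
    by (simp add: inner_diff_left inner_of_cart_Rep)
  also have "\<dots> = (\<Prod>b\<in>Basis. (u - l) \<bullet> b)"
    by (simp add: Basis_vec_def cart_eq_inner_axis axis_eq_axis prod.UNION_disjoint inner_diff_left)
  finally show "emeasure (distr lborel borel cart_of) (box l u) = (\<Prod>b\<in>Basis. (u - l) \<bullet> b)" .
qed simp

lemma lborel_distr_of_cart: "distr lborel borel of_cart = (lborel :: 'a::euclidean_space measure)"
proof -
  have "distr lborel borel of_cart = distr (distr (lborel :: 'a measure) borel cart_of) borel of_cart"
    by (simp add: lborel_distr_cart_of)
  also have "\<dots> = distr lborel borel (of_cart \<circ> cart_of)"
    by (simp add: distr_distr borel_measurable_linear linear_cart_of linear_of_cart)
  also have "\<dots> = lborel"
    by (simp add: comp_def distr_id2)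
  finally show ?thesis .
qed

lemma lborel_distr_orthogonal_transformation_cart:
  fixes T :: "real ^ 'n::{finite,wellorder} \<Rightarrow> real ^ 'n::_"
  assumes T: "orthogonal_transformation T"
  shows "distr lborel borel T = lborel"
proof (rule lborel_eqI[symmetric])
  fix l u :: "real ^ 'n::{finite,wellorder}"
  assume le: "\<And>b. b \<in> Basis \<Longrightarrow> l \<bullet> b \<le> u \<bullet> b"
  have T_inv: "orthogonal_transformation (inv T)"
    using T by (rule orthogonal_transformation_inv)
  have preimage: "T -` box l u = inv T ` box l u"
    using T by (simp add: bij_vimage_eq_inv_image orthogonal_transformation_bij)
  have "T -` box l u \<in> lmeasurable"
    unfolding preimage using T_inv by (intro measurable_orthogonal_image) auto
  moreover have "T -` box l u \<in> sets borel"
    using borel_measurable_linear[OF orthogonal_transformation_linear[OF T]]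
    by (rule measurable_sets_borel) simp
  ultimately have "emeasure lborel (T -` box l u) = measure lebesgue (T -` box l u)"
    by (metis emeasure_eq_measure2 lborelD fmeasurableD emeasure_completion main_part)
  then have "emeasure (distr lborel borel T) (box l u) = measure lebesgue (inv T ` box l u)"
    using T by (simp add: emeasure_distr borel_measurable_linear orthogonal_transformation_linear
        flip: preimage)
  also have "\<dots> = measure lebesgue (box l u)"
    using T_inv by (simp add: measure_orthogonal_image)
  also have "\<dots> = (\<Prod>b\<in>Basis. (u - l) \<bullet> b)"
    using le by (simp add: measure_def emeasure_lborel_box prod_nonneg inner_diff_left)
  finally show "emeasure (distr lborel borel T) (box l u) = (\<Prod>b\<in>Basis. (u - l) \<bullet> b)" .
qed simp

lemma lborel_distr_orthogonal_transformation:
  fixes H :: "'a::euclidean_space \<Rightarrow> 'a"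
  assumes H: "orthogonal_transformation H"
  shows "distr lborel borel H = lborel"
proof -
  define T where "T = cart_of \<circ> H \<circ> of_cart"
  have T: "orthogonal_transformation T"
    using H by (simp add: orthogonal_transformation_def T_def inner_cart_of inner_of_cart linear_compose
        linear_cart_of linear_of_cart)
  have "distr lborel borel H = distr (distr (lborel :: (real ^ 'a basis_index) measure) borel of_cart) borel H"
    by (simp add: lborel_distr_of_cart)
  also have "\<dots> = distr lborel borel (of_cart \<circ> T)"
    using H by (simp add: distr_distr borel_measurable_linear linear_of_cart
        orthogonal_transformation_linear T_def comp_def)
  also have "\<dots> = distr (distr lborel borel T) borel of_cart"
    using T by (simp add: distr_distr borel_measurable_linear linear_of_cart
        orthogonal_transformation_linear)
  also have "\<dots> = lborel"
    using T by (simp add: lborel_distr_orthogonal_transformation_cart lborel_distr_of_cart)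
  finally show ?thesis .
qed

section \<open>The surface measure\<close>

lemma sets_sphere_measure [simp, measurable_cong]:
  "sets (sphere_measure :: 'a::euclidean_space measure) = sets borel"
  by (simp add: sphere_measure_def)

lemma space_sphere_measure [simp]: "space (sphere_measure :: 'a::euclidean_space measure) = UNIV"
  by (simp add: sphere_measure_def)

lemma measurable_sgn_ball: "sgn \<in> restrict_space lborel (ball (0::'a::euclidean_space) 1) \<rightarrow>\<^sub>M borel"
  by (intro measurable_restrict_space1) simp

lemma integral_sphere_measure:
  fixes f :: "'a::euclidean_space \<Rightarrow> real"
  assumes f: "f \<in> borel_measurable borel"
  shows "(\<integral>x. f x \<partial>sphere_measure) =
    real DIM('a) * (\<integral>x. indicator (ball 0 1) x * f (sgn x) \<partial>lborel)"
proof -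
  have "(\<lambda>x. f (sgn x)) \<in> borel_measurable (restrict_space lborel (ball (0::'a) 1))"
    using measurable_comp[OF measurable_sgn_ball f] by (simp add: comp_def)
  then show ?thesis
    unfolding sphere_measure_def using measurable_sgn_ball f
    by (subst integral_distr) (auto simp: integral_density integral_restrict_space)
qed

lemma integral_sphere_measure_orthogonal_transformation:
  fixes H :: "'a::euclidean_space \<Rightarrow> 'a" and f :: "'a \<Rightarrow> real"
  assumes H: "orthogonal_transformation H" and [measurable]: "f \<in> borel_measurable borel"
  shows "(\<integral>x. f (H x) \<partial>sphere_measure) = (\<integral>x. f x \<partial>sphere_measure)"
proof -
  have [measurable]: "H \<in> borel_measurable borel"
    using H by (simp add: borel_measurable_linear orthogonal_transformation_linear)
  have sgn_H: "sgn (H x) = H (sgn x)" for x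
    using H by (simp add: sgn_div_norm orthogonal_transformation_norm divide_inverse
        orthogonal_transformation_scaleR)
  define G where "G y = indicator (ball (0::'a) 1) y * f (sgn y)" for y
  have [measurable]: "ball (0::'a) 1 \<in> sets borel"
    by simp
  have [measurable]: "G \<in> borel_measurable borel"
    unfolding G_def by measurable
  have "(\<integral>x. f (H x) \<partial>sphere_measure) = real DIM('a) * (\<integral>x. G (H x) \<partial>lborel)"
    using H by (simp add: integral_sphere_measure G_def sgn_H orthogonal_transformation_norm
        indicator_def)
  also have "\<dots> = real DIM('a) * (\<integral>x. G x \<partial>distr lborel borel H)"
    by (simp add: integral_distr)
  also have "\<dots> = (\<integral>x. f x \<partial>sphere_measure)"
    using H by (simp add: lborel_distr_orthogonal_transformation integral_sphere_measure G_def)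
  finally show ?thesis .
qed

lemma AE_sphere_measure_norm: "AE x in (sphere_measure :: 'a::euclidean_space measure). norm x = 1"
proof -
  have "AE x in lborel. x \<in> ball (0::'a) 1 \<longrightarrow> norm (sgn x) = 1"
    using AE_lborel_singleton[of 0] by eventually_elim (simp add: norm_sgn)
  then have "AE x in restrict_space lborel (ball (0::'a) 1). norm (sgn x) = 1"
    by (subst AE_restrict_space_iff) auto
  then have "AE x in density (restrict_space lborel (ball (0::'a) 1)) (\<lambda>_. ennreal (real DIM('a))).
      norm (sgn x) = 1"
    by (subst AE_density) auto
  then show ?thesis
    unfolding sphere_measure_def using measurable_sgn_ball by (subst AE_distr_iff) auto
qed

lemma emeasure_sphere_measure_UNIV:
  "emeasure (sphere_measure :: 'a::euclidean_space measure) UNIV =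
    ennreal (real DIM('a)) * emeasure lborel (ball (0::'a) 1)"
proof -
  have "emeasure (sphere_measure :: 'a measure) UNIV =
      emeasure (density (restrict_space lborel (ball (0::'a) 1)) (\<lambda>_. ennreal (real DIM('a)))) (ball 0 1)"
    unfolding sphere_measure_def using measurable_sgn_ball
    by (subst emeasure_distr) (auto simp: space_restrict_space)
  also have "\<dots> = (\<integral>\<^sup>+x. ennreal (real DIM('a)) * indicator (ball (0::'a) 1) x \<partial>lborel)"
    by (subst emeasure_density)
      (auto simp: sets_restrict_space_iff nn_integral_restrict_space
        intro!: nn_integral_cong split: split_indicator)
  also have "\<dots> = ennreal (real DIM('a)) * emeasure lborel (ball (0::'a) 1)"
    by (subst nn_integral_cmult_indicator) auto
  finally show ?thesis .
qed

lemma finite_measure_sphere_measure: "finite_measure (sphere_measure :: 'a::euclidean_space measure)"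
proof (rule finite_measureI)
  show "emeasure (sphere_measure :: 'a measure) (space sphere_measure) \<noteq> \<infinity>"
    using emeasure_lborel_ball_finite[of "0::'a" 1]
    by (simp add: emeasure_sphere_measure_UNIV ennreal_mult_eq_top_iff)
qed

lemma measure_sphere_measure_pos: "measure (sphere_measure :: 'a::euclidean_space measure) UNIV > 0"
proof -
  have "measure (sphere_measure :: 'a measure) UNIV = real DIM('a) * measure lborel (ball (0::'a) 1)"
    unfolding measure_def emeasure_sphere_measure_UNIV by (simp add: enn2real_mult)
  then show ?thesis
    using content_ball_pos[of 1 "0::'a"] by simp
qed

lemma integrable_sphere_measure_continuous:
  fixes f :: "'a::euclidean_space \<Rightarrow> real"
  assumes f: "continuous_on UNIV f"
  shows "integrable sphere_measure f"
proof -
  have "bounded (f ` sphere 0 1)"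
    by (intro compact_imp_bounded compact_continuous_image continuous_on_subset[OF f]) auto
  then obtain B where B: "\<forall>y\<in>f ` sphere 0 1. norm y \<le> B"
    by (auto simp: bounded_iff)
  have "AE x in sphere_measure. norm (f x) \<le> B"
    using AE_sphere_measure_norm by eventually_elim (use B in auto)
  moreover have "f \<in> borel_measurable sphere_measure"
    using borel_measurable_continuous_onI[OF f]
    by (simp add: measurable_cong_sets[OF sets_sphere_measure refl])
  ultimately show ?thesis
    by (rule finite_measure.integrable_const_bound[OF finite_measure_sphere_measure])
qed

lemma pair_sigma_finite_sphere_measure:
  "pair_sigma_finite (sphere_measure :: 'a::euclidean_space measure) (sphere_measure :: 'a measure)"
  using finite_measure_sphere_measure[where 'a = 'a]
  by (simp add: pair_sigma_finite_def finite_measure_def)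

lemma integrable_sphere_measure_pair_continuous:
  fixes f :: "'a::euclidean_space \<times> 'a \<Rightarrow> real"
  assumes f: "continuous_on UNIV f"
  shows "integrable (sphere_measure \<Otimes>\<^sub>M sphere_measure) f"
proof -
  let ?S = "sphere_measure :: 'a measure"
  interpret pair_sigma_finite ?S ?S
    by (rule pair_sigma_finite_sphere_measure)
  have "bounded (f ` (sphere 0 1 \<times> sphere 0 1))"
    by (intro compact_imp_bounded compact_continuous_image continuous_on_subset[OF f] compact_Times)
      auto
  then obtain B where B: "\<forall>z\<in>f ` (sphere 0 1 \<times> sphere 0 1). norm z \<le> B"
    by (auto simp: bounded_iff)
  have "AE z in ?S \<Otimes>\<^sub>M ?S. norm (fst z) = 1 \<and> norm (snd z) = 1"
  proof (rule AE_pair_measure)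
    show "AE x in ?S. AE y in ?S. norm (fst (x, y)) = 1 \<and> norm (snd (x, y)) = 1"
      using AE_sphere_measure_norm
      by eventually_elim (use AE_sphere_measure_norm in \<open>eventually_elim, simp\<close>)
  qed measurable
  then have "AE z in ?S \<Otimes>\<^sub>M ?S. norm (f z) \<le> B"
    by eventually_elim (use B in \<open>auto simp: mem_Times_iff\<close>)
  moreover have "f \<in> borel_measurable (?S \<Otimes>\<^sub>M ?S)"
    using borel_measurable_continuous_onI[OF f]
    by (simp add: measurable_cong_sets[OF sets_pair_measure_cong[OF sets_sphere_measure sets_sphere_measure] refl]
        borel_prod)
  moreover have "finite_measure (?S \<Otimes>\<^sub>M ?S)"
    by (intro finite_measure_pair_measure finite_measure_sphere_measure)
  ultimately show ?thesis
    using finite_measure.integrable_const_bound by blast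
qed

section \<open>Reflections and integrals of zonal functions\<close>

text \<open>Because \<open>x / 0 = 0\<close>, \<open>reflection 0\<close> is the identity.\<close>

definition reflection :: "'a::real_inner \<Rightarrow> 'a \<Rightarrow> 'a" where
  "reflection u v = v - (2 * (v \<bullet> u) / (u \<bullet> u)) *\<^sub>R u"

lemma inner_reflection_left: "reflection u v \<bullet> w = v \<bullet> reflection u w"
  by (simp add: reflection_def inner_diff_left inner_diff_right inner_commute)

lemma reflection_reflection [simp]: "reflection u (reflection u v) = v"
  by (cases "u = 0") (simp_all add: reflection_def inner_diff_left algebra_simps field_simps)

lemma linear_reflection: "linear (reflection u)"
  by (rule linearI) (simp_all add: reflection_def inner_add_left add_divide_distrib algebra_simps)

lemma orthogonal_transformation_reflection: "orthogonal_transformation (reflection u)"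
  by (simp add: orthogonal_transformation_def linear_reflection inner_reflection_left)

lemma reflection_self: "reflection u u = - u"
  by (cases "u = 0") (simp_all add: reflection_def scaleR_2)

lemma reflection_orthogonal: "v \<bullet> u = 0 \<Longrightarrow> reflection u v = v"
  by (simp add: reflection_def)

lemma reflection_diff:
  assumes "norm x = norm y"
  shows "reflection (x - y) x = y"
proof (cases "x = y")
  case False
  have "x \<bullet> x = y \<bullet> y"
    using assms by (simp add: dot_square_norm)
  then have "(x - y) \<bullet> (x - y) = 2 * (x \<bullet> (x - y))"
    by (simp add: inner_diff_left inner_diff_right inner_commute)
  moreover from False have "(x - y) \<bullet> (x - y) \<noteq> 0"
    by simp
  ultimately show ?thesis
    by (simp add: reflection_def)
qed (simp add: reflection_def)

lemma integral_sphere_zonal_rotate: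
  fixes F :: "real \<Rightarrow> real" and u v :: "'a::euclidean_space"
  assumes [measurable]: "F \<in> borel_measurable borel" and uv: "norm u = norm v"
  shows "(\<integral>x. F (x \<bullet> u) \<partial>sphere_measure) = (\<integral>x. F (x \<bullet> v) \<partial>sphere_measure)"
proof -
  have "reflection (v - u) x \<bullet> v = x \<bullet> u" for x
    using reflection_diff[of v u] uv by (simp add: inner_reflection_left)
  then show ?thesis
    using integral_sphere_measure_orthogonal_transformation[OF orthogonal_transformation_reflection,
        of "\<lambda>x. F (x \<bullet> v)" "v - u"]
    by simp
qed

lemma integral_sphere_zonal_swap:
  fixes F :: "real \<Rightarrow> real" and u v :: "'a::euclidean_space"
  assumes [measurable]: "F \<in> borel_measurable borel" and uv: "norm u = norm v"
  shows "(\<integral>x. (x \<bullet> v) * F (x \<bullet> u) \<partial>sphere_measure) = (\<integral>x. (x \<bullet> u) * F (x \<bullet> v) \<partial>sphere_measure)"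
proof -
  have "reflection (v - u) v = u"
    using reflection_diff[of v u] uv by simp
  then have "reflection (v - u) u = v"
    by (metis reflection_reflection)
  with \<open>reflection (v - u) v = u\<close> have "(reflection (v - u) x \<bullet> u) * F (reflection (v - u) x \<bullet> v) = (x \<bullet> v) * F (x \<bullet> u)" for x
    by (simp add: inner_reflection_left)
  then show ?thesis
    using integral_sphere_measure_orthogonal_transformation[OF orthogonal_transformation_reflection,
        of "\<lambda>x. (x \<bullet> u) * F (x \<bullet> v)" "v - u"]
    by simp
qed

lemma integral_sphere_zonal_orthogonal:
  fixes F :: "real \<Rightarrow> real" and u w :: "'a::euclidean_space"
  assumes [measurable]: "F \<in> borel_measurable borel" and "u \<bullet> w = 0"
  shows "(\<integral>x. (x \<bullet> w) * F (x \<bullet> u) \<partial>sphere_measure) = 0"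
proof -
  have "reflection w u = u"
    using \<open>u \<bullet> w = 0\<close> by (rule reflection_orthogonal)
  then have "(reflection w x \<bullet> w) * F (reflection w x \<bullet> u) = - ((x \<bullet> w) * F (x \<bullet> u))" for x
    by (simp add: inner_reflection_left reflection_self)
  then have "(\<integral>x. (x \<bullet> w) * F (x \<bullet> u) \<partial>sphere_measure) = - (\<integral>x. (x \<bullet> w) * F (x \<bullet> u) \<partial>sphere_measure)"
    using integral_sphere_measure_orthogonal_transformation[OF orthogonal_transformation_reflection,
        of "\<lambda>x. (x \<bullet> w) * F (x \<bullet> u)" w]
    by simp
  then show ?thesis
    by simp
qed

lemma integrable_sphere_zonal:
  fixes F :: "real \<Rightarrow> real" and u w :: "'a::euclidean_space"
  assumes "continuous_on UNIV F"
  shows "integrable sphere_measure (\<lambda>x. F (x \<bullet> u))"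
    and "integrable sphere_measure (\<lambda>x. (x \<bullet> w) * F (x \<bullet> u))"
proof -
  have F_u: "continuous_on UNIV (\<lambda>x::'a. F (x \<bullet> u))"
    by (rule continuous_on_compose2[OF assms continuous_on_inner[OF continuous_on_id continuous_on_const]])
      simp
  then show "integrable sphere_measure (\<lambda>x. F (x \<bullet> u))"
    by (rule integrable_sphere_measure_continuous)
  from F_u show "integrable sphere_measure (\<lambda>x. (x \<bullet> w) * F (x \<bullet> u))"
    by (intro integrable_sphere_measure_continuous continuous_on_mult continuous_on_inner
        continuous_on_id continuous_on_const)
qed

lemma integral_sphere_zonal_linear:
  fixes F :: "real \<Rightarrow> real" and u v :: "'a::euclidean_space"
  assumes F: "continuous_on UNIV F" and u: "norm u = 1"
  shows "(\<integral>x. (x \<bullet> v) * F (x \<bullet> u) \<partial>sphere_measure) =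
    (v \<bullet> u) * (\<integral>x. (x \<bullet> u) * F (x \<bullet> u) \<partial>sphere_measure)"
proof -
  have F_meas: "F \<in> borel_measurable borel"
    using F by (rule borel_measurable_continuous_onI)
  define w where "w = v - (v \<bullet> u) *\<^sub>R u"
  have "u \<bullet> w = 0"
    using u by (simp add: w_def inner_diff_right inner_commute dot_square_norm)
  have "(\<integral>x. (x \<bullet> v) * F (x \<bullet> u) \<partial>sphere_measure) =
      (\<integral>x. (v \<bullet> u) * ((x \<bullet> u) * F (x \<bullet> u)) + (x \<bullet> w) * F (x \<bullet> u) \<partial>sphere_measure)"
    by (simp add: w_def inner_diff_right algebra_simps)
  also have "\<dots> = (v \<bullet> u) * (\<integral>x. (x \<bullet> u) * F (x \<bullet> u) \<partial>sphere_measure) +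
      (\<integral>x. (x \<bullet> w) * F (x \<bullet> u) \<partial>sphere_measure)"
    by (subst Bochner_Integration.integral_add) (auto intro: integrable_sphere_zonal[OF F])
  also have "(\<integral>x. (x \<bullet> w) * F (x \<bullet> u) \<partial>sphere_measure) = 0"
    using F_meas \<open>u \<bullet> w = 0\<close> by (rule integral_sphere_zonal_orthogonal)
  finally show ?thesis
    by simp
qed

section \<open>Variance of isotropic random variables and of their sums\<close>

lemma power2_norm_diff_unit:
  fixes x P :: "'a::real_inner"
  assumes "norm x = 1" and "norm P = 1"
  shows "(norm (x - P))\<^sup>2 = 2 - 2 * (x \<bullet> P)"
proof -
  have "x \<bullet> x = 1" "P \<bullet> P = 1"
    using assms by (simp_all add: dot_square_norm)
  then show ?thesis
    by (simp add: power2_norm_eq_inner inner_diff_left inner_diff_right inner_commute)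
qed

lemma integral_sphere_power2_dist_zonal:
  fixes F :: "real \<Rightarrow> real" and P y :: "'a::euclidean_space"
  assumes F: "continuous_on UNIV F" and P: "norm P = 1" and y: "norm y = 1"
  shows "(\<integral>x. (norm (x - P))\<^sup>2 * F (x \<bullet> y) \<partial>sphere_measure) =
    2 * (\<integral>x. F (x \<bullet> P) \<partial>sphere_measure) - 2 * (y \<bullet> P) * (\<integral>x. (x \<bullet> P) * F (x \<bullet> P) \<partial>sphere_measure)"
proof -
  have F_meas [measurable]: "F \<in> borel_measurable borel"
    using F by (rule borel_measurable_continuous_onI)
  have "(\<integral>x. (norm (x - P))\<^sup>2 * F (x \<bullet> y) \<partial>sphere_measure) =
      (\<integral>x. 2 * F (x \<bullet> y) - 2 * ((x \<bullet> P) * F (x \<bullet> y)) \<partial>sphere_measure)"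
  proof (rule integral_cong_AE)
    show "AE x in sphere_measure.
        (norm (x - P))\<^sup>2 * F (x \<bullet> y) = 2 * F (x \<bullet> y) - 2 * ((x \<bullet> P) * F (x \<bullet> y))"
      using AE_sphere_measure_norm by eventually_elim (simp add: power2_norm_diff_unit P algebra_simps)
  qed measurable
  also have "\<dots> = 2 * (\<integral>x. F (x \<bullet> y) \<partial>sphere_measure) - 2 * (\<integral>x. (x \<bullet> P) * F (x \<bullet> y) \<partial>sphere_measure)"
    by (subst Bochner_Integration.integral_diff)
      (auto intro!: integrable_mult_right integrable_sphere_zonal[OF F])
  also have "(\<integral>x. F (x \<bullet> y) \<partial>sphere_measure) = (\<integral>x. F (x \<bullet> P) \<partial>sphere_measure)"
    using y P by (intro integral_sphere_zonal_rotate F_meas) simp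
  also have "(\<integral>x. (x \<bullet> P) * F (x \<bullet> y) \<partial>sphere_measure) = (\<integral>x. (x \<bullet> y) * F (x \<bullet> P) \<partial>sphere_measure)"
    using y P by (intro integral_sphere_zonal_swap F_meas) simp
  also have "\<dots> = (y \<bullet> P) * (\<integral>x. (x \<bullet> P) * F (x \<bullet> P) \<partial>sphere_measure)"
    using F P by (rule integral_sphere_zonal_linear)
  finally show ?thesis
    by simp
qed

lemma sph_var_zonal:
  fixes F :: "real \<Rightarrow> real" and P :: "'a::euclidean_space"
  assumes F: "continuous_on UNIV F" and P: "norm P = 1"
  shows "sph_var P (\<lambda>x. F (x \<bullet> P)) =
    2 * (\<integral>x. F (x \<bullet> P) \<partial>sphere_measure) - 2 * (\<integral>x. (x \<bullet> P) * F (x \<bullet> P) \<partial>sphere_measure)"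
  using integral_sphere_power2_dist_zonal[OF F P P] P by (simp add: sph_var_def dot_square_norm)

lemma integrable_iso_sum_variance_integrand:
  fixes F1 F2 :: "real \<Rightarrow> real" and P :: "'a::euclidean_space"
  assumes F1: "continuous_on UNIV F1" and F2: "continuous_on UNIV F2"
  shows "integrable (sphere_measure \<Otimes>\<^sub>M sphere_measure)
    (\<lambda>(x, y). (norm (x - P))\<^sup>2 * (F1 (y \<bullet> P) * F2 (x \<bullet> y)))"
proof -
  have "continuous_on UNIV (\<lambda>z::'a \<times> 'a. F1 (snd z \<bullet> P))"
    by (rule continuous_on_compose2[OF F1]) (intro continuous_intros, simp)
  moreover have "continuous_on UNIV (\<lambda>z::'a \<times> 'a. F2 (fst z \<bullet> snd z))"
    by (rule continuous_on_compose2[OF F2]) (intro continuous_intros, simp)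
  ultimately show ?thesis
    unfolding case_prod_beta'
    by (intro integrable_sphere_measure_pair_continuous continuous_on_mult continuous_intros)
qed

lemma sph_var_iso_sum_density:
  fixes F1 F2 :: "real \<Rightarrow> real" and P :: "'a::euclidean_space"
  assumes F1: "continuous_on UNIV F1" and F2: "continuous_on UNIV F2" and P: "norm P = 1"
  shows "sph_var P (iso_sum_density P F1 F2) =
    2 * (\<integral>x. F1 (x \<bullet> P) \<partial>sphere_measure) * (\<integral>x. F2 (x \<bullet> P) \<partial>sphere_measure)
    - 2 * (\<integral>x. (x \<bullet> P) * F1 (x \<bullet> P) \<partial>sphere_measure) * (\<integral>x. (x \<bullet> P) * F2 (x \<bullet> P) \<partial>sphere_measure)"
proof -
  let ?S = "sphere_measure :: 'a measure"
  interpret pair_sigma_finite ?S ?S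
    by (rule pair_sigma_finite_sphere_measure)
  have [measurable]: "F1 \<in> borel_measurable borel" "F2 \<in> borel_measurable borel"
    using F1 F2 by (simp_all add: borel_measurable_continuous_onI)
  define c2 where "c2 = (\<integral>x. F2 (x \<bullet> P) \<partial>?S)"
  define m2 where "m2 = (\<integral>x. (x \<bullet> P) * F2 (x \<bullet> P) \<partial>?S)"
  define h where "h x y = (norm (x - P))\<^sup>2 * (F1 (y \<bullet> P) * F2 (x \<bullet> y))" for x y :: 'a
  have "sph_var P (iso_sum_density P F1 F2) = (\<integral>y. (\<integral>x. h x y \<partial>?S) \<partial>?S)"
    using integrable_iso_sum_variance_integrand[OF F1 F2, of P]
    by (simp add: Fubini_integral sph_var_def iso_sum_density_def h_def)
  also have "\<dots> = (\<integral>y. 2 * c2 * F1 (y \<bullet> P) - 2 * m2 * ((y \<bullet> P) * F1 (y \<bullet> P)) \<partial>?S)"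
  proof (rule integral_cong_AE)
    show "AE y in ?S. (\<integral>x. h x y \<partial>?S) = 2 * c2 * F1 (y \<bullet> P) - 2 * m2 * ((y \<bullet> P) * F1 (y \<bullet> P))"
      using AE_sphere_measure_norm
    proof eventually_elim
      case (elim y)
      have "(\<integral>x. h x y \<partial>?S) = F1 (y \<bullet> P) * (\<integral>x. (norm (x - P))\<^sup>2 * F2 (x \<bullet> y) \<partial>?S)"
        by (simp add: h_def mult.left_commute)
      also have "\<dots> = F1 (y \<bullet> P) * (2 * c2 - 2 * (y \<bullet> P) * m2)"
        by (simp only: integral_sphere_power2_dist_zonal[OF F2 P elim] c2_def m2_def)
      also have "\<dots> = 2 * c2 * F1 (y \<bullet> P) - 2 * m2 * ((y \<bullet> P) * F1 (y \<bullet> P))"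
        by (simp add: algebra_simps)
      finally show ?case .
    qed
  qed (unfold h_def, measurable, measurable)
  also have "\<dots> = 2 * c2 * (\<integral>x. F1 (x \<bullet> P) \<partial>?S) - 2 * m2 * (\<integral>x. (x \<bullet> P) * F1 (x \<bullet> P) \<partial>?S)"
    by (subst Bochner_Integration.integral_diff)
      (auto intro!: integrable_mult_right integrable_sphere_zonal[OF F1])
  finally show ?thesis
    by (simp add: c2_def m2_def)
qed

corollary sph_var_iso_sum_density_normalized:
  fixes F1 F2 :: "real \<Rightarrow> real" and P :: "'a::euclidean_space"
  assumes F1: "continuous_on UNIV F1" and F2: "continuous_on UNIV F2" and P: "norm P = 1"
    and "(\<integral>x. F1 (x \<bullet> P) \<partial>sphere_measure) = 1" and "(\<integral>x. F2 (x \<bullet> P) \<partial>sphere_measure) = 1"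
  shows "sph_var P (iso_sum_density P F1 F2) =
    (2 * (sph_var P (\<lambda>x. F1 (x \<bullet> P)) + sph_var P (\<lambda>x. F2 (x \<bullet> P)))
      - sph_var P (\<lambda>x. F1 (x \<bullet> P)) * sph_var P (\<lambda>x. F2 (x \<bullet> P))) / 2"
  using assms by (simp add: sph_var_iso_sum_density sph_var_zonal algebra_simps)

lemma norm_const_pos:
  fixes P :: "'a::euclidean_space"
  assumes P: "norm P = 1"
  shows "norm_const P k > 0"
proof -
  let ?F = "\<lambda>t::real. 1 + t ^ k"
  have F: "continuous_on UNIV ?F"
    by (intro continuous_intros)
  have F_sym: "2 \<le> ?F t + ?F (- t)" for t
    by (cases "even k") (simp_all add: zero_le_even_power power_minus_odd)
  have "norm_const P k = (\<integral>x. ?F (x \<bullet> - P) \<partial>sphere_measure)"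
    unfolding norm_const_def
    by (intro integral_sphere_zonal_rotate borel_measurable_continuous_onI[OF F]) simp
  then have "2 * norm_const P k =
      (\<integral>x. ?F (x \<bullet> P) \<partial>sphere_measure) + (\<integral>x. ?F (x \<bullet> - P) \<partial>sphere_measure)"
    by (simp add: norm_const_def)
  also have "\<dots> = (\<integral>x. ?F (x \<bullet> P) + ?F (x \<bullet> - P) \<partial>sphere_measure)"
    by (intro Bochner_Integration.integral_add[symmetric] integrable_sphere_zonal[OF F])
  also have "\<dots> \<ge> (\<integral>x. 2 \<partial>(sphere_measure :: 'a measure))"
  proof (rule Bochner_Integration.integral_mono)
    show "integrable sphere_measure (\<lambda>x. ?F (x \<bullet> P) + ?F (x \<bullet> - P))"
      by (intro Bochner_Integration.integrable_add integrable_sphere_zonal[OF F])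
    show "2 \<le> ?F (x \<bullet> P) + ?F (x \<bullet> - P)" for x
      using F_sym[of "x \<bullet> P"] by simp
  qed (rule finite_measure.integrable_const[OF finite_measure_sphere_measure])
  finally show ?thesis
    using measure_sphere_measure_pos[where 'a = 'a] by simp
qed

lemma continuous_on_g_prof: "continuous_on UNIV (g_prof P k)"
  unfolding g_prof_def divide_inverse by (intro continuous_intros)

lemma integral_g_prof:
  fixes P :: "'a::euclidean_space"
  assumes "norm P = 1"
  shows "(\<integral>x. g_prof P k (x \<bullet> P) \<partial>sphere_measure) = 1"
  using norm_const_pos[OF assms, of k] by (simp add: g_prof_def norm_const_def)

theorem lemma3p3:
  fixes P :: "'a::euclidean_space" and k l :: nat
  assumes "DIM('a) \<ge> 3"
    and "P \<in> Basis"
  shows "sph_var P (iso_sum_density P (g_prof P k) (g_prof P l)) =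
           (2 * (sph_var P (\<lambda>x. g_prof P k (x \<bullet> P)) + sph_var P (\<lambda>x. g_prof P l (x \<bullet> P)))
            - sph_var P (\<lambda>x. g_prof P k (x \<bullet> P)) * sph_var P (\<lambda>x. g_prof P l (x \<bullet> P))) / 2"
proof -
  have P: "norm P = 1"
    using \<open>P \<in> Basis\<close> by simp
  show ?thesis
    by (intro sph_var_iso_sum_density_normalized continuous_on_g_prof P integral_g_prof)
qed

end
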